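(* If $X\subset\mathbb{R}^N$ is a nondegenerate continuum and $x\in X$, then every tangent $T\in\mathrm{Tan}(X,x)$ has the property that each connected component of $T$ is unbounded.
   Context: For nonempty $A,B$, $\mathrm{exc}(A,B)=\sup_{a\in A}\inf_{b\in B}|a-b|$; closed sets $X_m$ converge to a closed set $X$ (Attouch–Wets) if for every $r>0$, $\mathrm{exc}(X_m\cap\overline{B}(\mathbf{0},r),X)\to0$ and $\mathrm{exc}(X\cap\overline{B}(\mathbf{0},r),X_m)\to0$. A closed set $T\ni\mathbf{0}$ is a tangent of a closed set $X$ at $x\in X$ if $r_m^{-1}(X-x)\to T$ in this topology for some $r_m\downarrow0$; $\mathrm{Tan}(X,x)$ is the set of tangents. A continuum is a compact connected set; nondegenerate means it has more than one point. *)

theory Defs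
  imports "HOL-Analysis.Analysis"
begin

definition exc :: "'a::metric_space set \<Rightarrow> 'a set \<Rightarrow> real" where
  "exc A B = (if A = {} then 0 else (SUP a\<in>A. infdist a B))"

definition aw_converges :: "(nat \<Rightarrow> 'a::real_normed_vector set) \<Rightarrow> 'a set \<Rightarrow> bool" where
  "aw_converges Xs X \<longleftrightarrow>
     (\<forall>r>0. ((\<lambda>m. exc (Xs m \<inter> cball 0 r) X) \<longlongrightarrow> 0) sequentially \<and>
            ((\<lambda>m. exc (X \<inter> cball 0 r) (Xs m)) \<longlongrightarrow> 0) sequentially)"

definition Tan :: "'a::real_normed_vector set \<Rightarrow> 'a \<Rightarrow> 'a set set" where
  "Tan X x = {T. closed T \<and> 0 \<in> T \<and>
     (\<exists>r::nat \<Rightarrow> real. (\<forall>m. r m > 0) \<and> decseq r \<and> r \<longlonglongrightarrow> 0 \<and>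
        aw_converges (\<lambda>m. (\<lambda>y. inverse (r m) *\<^sub>R (y - x)) ` X) T)}"

end

theory Submission
  imports Defs
begin

text \<open>The rescaled copies of \<open>X\<close> are connected and, as the scale tends to \<open>0\<close>, escape every
  ball. Suppose a component \<open>C\<close> of their limit \<open>T\<close> were bounded. By Sura-Bura, \<open>C\<close> lies in a
  compact set \<open>K \<subseteq> ball 0 R\<close> that is clopen in \<open>T\<close>, so the rest of \<open>T\<close> keeps a distance
  \<open>d > 0\<close> from \<open>K\<close>. For large \<open>m\<close> the \<open>m\<close>-th copy comes close to \<open>K\<close> and also leaves
  \<open>ball 0 (R + d)\<close>, so by continuity of the distance to \<open>K\<close> it contains a point at distance
  exactly \<open>d/2\<close> from \<open>K\<close>. That point lies in \<open>cball 0 (R + d)\<close> yet is \<open>d/2\<close> away from all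
  of \<open>T\<close>, contradicting Attouch-Wets convergence.\<close>

lemma infdist_less_iff:
  fixes x :: "'a::metric_space"
  assumes "A \<noteq> {}"
  shows "infdist x A < e \<longleftrightarrow> (\<exists>a\<in>A. dist x a < e)"
proof
  assume "infdist x A < e"
  then have "(INF a\<in>A. dist x a) < e"
    using assms by (simp add: infdist_notempty)
  then show "\<exists>a\<in>A. dist x a < e"
    using cInf_lessD[of "(\<lambda>a. dist x a) ` A" e] assms by auto
next
  assume "\<exists>a\<in>A. dist x a < e"
  then show "infdist x A < e"
    using infdist_le le_less_trans by blast
qed

lemma infdist_le_exc:
  fixes A B :: "'a::metric_space set"
  assumes "a \<in> A" "bounded A" "B \<noteq> {}"
  shows "infdist a B \<le> exc A B"
proof -
  obtain b where "b \<in> B" using assms(3) by blast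
  obtain e where e: "\<And>y. y \<in> A \<Longrightarrow> dist b y \<le> e"
    using assms(2) bounded_any_center by metis
  have "bdd_above ((\<lambda>y. infdist y B) ` A)"
  proof (rule bdd_aboveI2)
    fix y assume "y \<in> A"
    then show "infdist y B \<le> e"
      using infdist_le[OF \<open>b \<in> B\<close>, of y] e[of y] by (metis dist_commute order_trans)
  qed
  then show ?thesis
    using assms(1) unfolding exc_def by (auto intro: cSUP_upper)
qed

lemma exc_lessD:
  fixes A B :: "'a::metric_space set"
  assumes "exc A B < e" "a \<in> A" "bounded A" "B \<noteq> {}"
  shows "\<exists>b\<in>B. dist a b < e"
  using infdist_le_exc[OF assms(2-4)] assms(1,4) by (simp add: infdist_less_iff[symmetric])

lemma aw_converges_eventually_exc_less:
  assumes "aw_converges Xs X" "r > 0" "e > 0"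
  shows "\<forall>\<^sub>F m in sequentially. exc (Xs m \<inter> cball 0 r) X < e \<and> exc (X \<inter> cball 0 r) (Xs m) < e"
proof -
  have "((\<lambda>m. exc (Xs m \<inter> cball 0 r) X) \<longlongrightarrow> 0) sequentially"
    and "((\<lambda>m. exc (X \<inter> cball 0 r) (Xs m)) \<longlongrightarrow> 0) sequentially"
    using assms(1,2) unfolding aw_converges_def by auto
  then show ?thesis
    using assms(3) by (intro eventually_conj order_tendstoD(2))
qed

lemma connected_infdist_intermediate:
  fixes S A :: "'a::metric_space set"
  assumes "connected S" "y1 \<in> S" "y2 \<in> S" "infdist y1 A \<le> s" "s \<le> infdist y2 A"
  obtains y where "y \<in> S" "infdist y A = s"
proof -
  have "connected ((\<lambda>y. infdist y A) ` S)"
    by (intro connected_continuous_image[OF _ assms(1)] continuous_intros)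
  then have "s \<in> (\<lambda>y. infdist y A) ` S"
    by (rule connectedD_interval[OF _ imageI[OF assms(2)] imageI[OF assms(3)] assms(4,5)])
  then show ?thesis using that by blast
qed

lemma dist_ge_half_gap:
  fixes A T :: "'a::metric_space set"
  assumes gap: "\<And>a t. a \<in> A \<Longrightarrow> t \<in> T - A \<Longrightarrow> d \<le> dist a t"
    and "A \<noteq> {}" "infdist y A = d / 2" "t \<in> T"
  shows "d / 2 \<le> dist y t"
proof (cases "t \<in> A")
  case True
  then show ?thesis using infdist_le[of t A y] assms(3) by simp
next
  case False
  have "d \<le> infdist t A"
    using gap \<open>t \<in> T\<close> False \<open>A \<noteq> {}\<close> by (auto simp: infdist_notempty dist_commute intro: cINF_greatest)
  moreover have "infdist t A \<le> infdist y A + dist t y" by (rule infdist_triangle)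
  ultimately show ?thesis using assms(3) by (simp add: dist_commute)
qed

lemma connected_crosses_gap:
  fixes S A T :: "'a::real_normed_vector set"
  assumes gap: "\<And>a t. a \<in> A \<Longrightarrow> t \<in> T - A \<Longrightarrow> d \<le> dist a t"
    and "A \<subseteq> ball 0 R" "connected S"
    and "a \<in> A" "y1 \<in> S" "dist a y1 < d / 2"
    and "y2 \<in> S" "R + d < norm y2"
  obtains y where "y \<in> S" "norm y \<le> R + d" "\<And>t. t \<in> T \<Longrightarrow> d / 2 \<le> dist y t"
proof -
  have "A \<noteq> {}" using \<open>a \<in> A\<close> by blast
  have "infdist y1 A \<le> d / 2"
    using infdist_le[OF \<open>a \<in> A\<close>, of y1] assms(6) by (simp add: dist_commute)
  moreover have "d / 2 \<le> infdist y2 A"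
  proof -
    have "d \<le> dist y2 a'" if "a' \<in> A" for a'
      using that assms(2,8) norm_triangle_ineq2[of y2 a'] by (auto simp: dist_norm)
    then have "d \<le> infdist y2 A"
      using \<open>A \<noteq> {}\<close> by (simp add: infdist_notempty cINF_greatest)
    then show ?thesis using assms(6) zero_le_dist[of a y1] by linarith
  qed
  ultimately obtain y where y: "y \<in> S" "infdist y A = d / 2"
    using connected_infdist_intermediate[OF assms(3,5,7)] by blast
  have "0 < d" using assms(6) zero_le_dist[of a y1] by linarith
  then obtain a' where "a' \<in> A" "dist y a' < d"
    using y(2) \<open>A \<noteq> {}\<close> infdist_less_iff[of A y d] by auto
  then have "norm y \<le> R + d"
    using assms(2) norm_triangle_ineq[of a' "y - a'"] by (auto simp: dist_norm norm_minus_commute)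
  with y show ?thesis
    using that dist_ge_half_gap[OF gap \<open>A \<noteq> {}\<close> y(2)] by blast
qed

lemma bounded_component_separated:
  fixes T :: "'a::euclidean_space set"
  assumes "closed T" "C \<in> components T" "C \<subseteq> ball 0 R"
  obtains K d where "C \<subseteq> K" "K \<subseteq> ball 0 R" "d > 0"
    "\<And>a t. a \<in> K \<Longrightarrow> t \<in> T - K \<Longrightarrow> d \<le> dist a t"
proof -
  have "compact C"
    using assms closed_connected_component components_iff bounded_subset[OF bounded_ball]
    by (metis compact_eq_bounded_closed)
  then obtain K where K: "openin (top_of_set T) K" "compact K" "C \<subseteq> K" "K \<subseteq> ball 0 R"
    using Sura_Bura_clopen_subset[OF closed_imp_locally_compact[OF assms(1)] assms(2)] assms(3)
    by blast
  have "closedin (top_of_set T) (T - K)"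
    using closedin_diff[OF closedin_topspace K(1)] by (simp only: topspace_euclidean_subtopology)
  then have "closed (T - K)"
    using closedin_closed_trans assms(1) by metis
  moreover have "K \<inter> (T - K) = {}" by blast
  ultimately show ?thesis
    using separate_compact_closed[OF K(2)] K(3,4) that by metis
qed

lemma aw_limit_of_escaping_connected_components_unbounded:
  fixes Ss :: "nat \<Rightarrow> 'a::euclidean_space set"
  assumes "closed T" "aw_converges Ss T" "\<And>m. connected (Ss m)"
    and escape: "\<And>\<rho>. \<forall>\<^sub>F m in sequentially. \<exists>y\<in>Ss m. \<rho> < norm y"
    and "C \<in> components T"
  shows "\<not> bounded C"
proof
  assume "bounded C"
  then obtain R where "R > 0" "C \<subseteq> ball 0 R"
    using bounded_subset_ballD by blast
  then obtain K d where "C \<subseteq> K" "K \<subseteq> ball 0 R" "d > 0"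
    and gap: "\<And>a t. a \<in> K \<Longrightarrow> t \<in> T - K \<Longrightarrow> d \<le> dist a t"
    using bounded_component_separated[OF assms(1,5)] by metis
  obtain c where "c \<in> C" using in_components_nonempty[OF assms(5)] by blast
  have "R + d > 0" "d / 2 > 0" using \<open>R > 0\<close> \<open>d > 0\<close> by simp_all
  from eventually_happens'[OF sequentially_bot eventually_conj[OF
        aw_converges_eventually_exc_less[OF assms(2) this] escape]]
  obtain m y2 where
        near_T: "exc (Ss m \<inter> cball 0 (R + d)) T < d / 2"
    and near_Ss: "exc (T \<inter> cball 0 (R + d)) (Ss m) < d / 2"
    and "y2 \<in> Ss m" "R + d < norm y2"
    by blast
  have "c \<in> T \<inter> cball 0 (R + d)"
    using \<open>c \<in> C\<close> \<open>C \<subseteq> ball 0 R\<close> in_components_subset[OF assms(5)] \<open>d > 0\<close> by auto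
  moreover have "Ss m \<noteq> {}" using \<open>y2 \<in> Ss m\<close> by blast
  ultimately obtain y1 where "y1 \<in> Ss m" "dist c y1 < d / 2"
    using exc_lessD[OF near_Ss _ bounded_Int[OF disjI2[OF bounded_cball]]] by blast
  moreover have "c \<in> K" using \<open>c \<in> C\<close> \<open>C \<subseteq> K\<close> by blast
  ultimately obtain y where "y \<in> Ss m \<inter> cball 0 (R + d)"
    and far: "\<And>t. t \<in> T \<Longrightarrow> d / 2 \<le> dist y t"
    using connected_crosses_gap[OF gap \<open>K \<subseteq> ball 0 R\<close> assms(3) \<open>c \<in> K\<close>] \<open>y2 \<in> Ss m\<close> \<open>R + d < norm y2\<close>
    by (metis IntI mem_cball_0)
  moreover have "T \<noteq> {}" using \<open>c \<in> T \<inter> cball 0 (R + d)\<close> by blast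
  ultimately obtain t where "t \<in> T" "dist y t < d / 2"
    using exc_lessD[OF near_T _ bounded_Int[OF disjI2[OF bounded_cball]]] by blast
  then show False using far by force
qed

lemma norm_scaleR_inverse_eventually_gt:
  fixes r :: "nat \<Rightarrow> real" and v :: "'a::real_normed_vector"
  assumes "r \<longlonglongrightarrow> 0" "\<And>m. 0 < r m" "v \<noteq> 0"
  shows "\<forall>\<^sub>F m in sequentially. \<rho> < norm (inverse (r m) *\<^sub>R v)"
proof -
  have "filterlim (\<lambda>m. inverse (r m)) at_top sequentially"
    using filterlim_inverse_at_top[OF assms(1)] assms(2) by simp
  then have "filterlim (\<lambda>m. norm v * inverse (r m)) at_top sequentially"
    using assms(3) by (intro filterlim_tendsto_pos_mult_at_top[OF tendsto_const]) simp_all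
  then have "\<forall>\<^sub>F m in sequentially. \<rho> < norm v * inverse (r m)"
    by (simp add: filterlim_at_top_dense)
  then show ?thesis
    by (rule eventually_mono) (use assms(2) in \<open>simp add: mult.commute less_imp_le\<close>)
qed

theorem lemma2p5:
  fixes X :: "'a::euclidean_space set" and x :: 'a and T :: "'a set"
  assumes "compact X" and "connected X" and "\<exists>a\<in>X. \<exists>b\<in>X. a \<noteq> b"
    and "x \<in> X" and "T \<in> Tan X x"
  shows "\<forall>C\<in>components T. \<not> bounded C"
proof
  fix C assume "C \<in> components T"
  obtain r :: "nat \<Rightarrow> real" where "\<And>m. r m > 0" "r \<longlonglongrightarrow> 0" "closed T"
    and aw: "aw_converges (\<lambda>m. (\<lambda>y. inverse (r m) *\<^sub>R (y - x)) ` X) T"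
    using assms(5) unfolding Tan_def by blast
  obtain p where "p \<in> X" "p \<noteq> x" using assms(3) by metis
  show "\<not> bounded C"
  proof (rule aw_limit_of_escaping_connected_components_unbounded[OF \<open>closed T\<close> aw _ _ \<open>C \<in> components T\<close>])
    show "connected ((\<lambda>y. inverse (r m) *\<^sub>R (y - x)) ` X)" for m
      by (intro connected_continuous_image[OF _ assms(2)] continuous_intros)
    fix \<rho> :: real
    have "\<forall>\<^sub>F m in sequentially. \<rho> < norm (inverse (r m) *\<^sub>R (p - x))"
      using \<open>r \<longlonglongrightarrow> 0\<close> \<open>\<And>m. r m > 0\<close> \<open>p \<noteq> x\<close> by (intro norm_scaleR_inverse_eventually_gt) simp_all
    then show "\<forall>\<^sub>F m in sequentially. \<exists>y\<in>(\<lambda>y. inverse (r m) *\<^sub>R (y - x)) ` X. \<rho> < norm y"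
      by (rule eventually_mono) (use \<open>p \<in> X\<close> in blast)
  qed
qed

end
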